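(* For any abstract path $\tau$, $w(\tau)=1+O(\tau)+B(\tau)-s_1(\tau)-u_2(\tau)$.
   Context: $\mathbb F=\{0,1\}$, $\mathbb N=\{0,1,2,\dots\}$. Abstract vertex types: $o$ (interior), $u$ (unstable), $s$ (stable). An abstract edge is $\varepsilon=(\mu,(o_1,u_1,s_1),(o_2,u_2,s_2))\in\mathbb F\times\mathbb N^3\times\mathbb N^3$ with: if $\mu=0$ then $s_1=u_2=0$; if $\mu=1$ then $o_1=o_2=0$ (interior if $\mu=0$, boundary if $\mu=1$). Weight: $w(\varepsilon)=1$ if $\mu=0$, $2-s_1-u_2$ if $\mu=1$. An abstract path $\tau=(T,\tau,\sigma)$: a non-empty finite directed tree $T=(V,E)$ (nodes; arrows, or breaks), $\tau:V\to$ abstract edges, $\sigma:E\to\{o,u,s\}$, such that for each node $v$ and type $X$, $X_1(v)\ge|\{e:t(e)=v,\sigma(e)=X\}|$ and $X_2(v)\ge|\{e:s(e)=v,\sigma(e)=X\}|$, with $X_i(v)$ the entries of $\tau(v)$. Ends: $X_1(\tau)=\sum_vX_1(v)-|\sigma^{-1}(X)|$, $X_2(\tau)=\sum_vX_2(v)-|\sigma^{-1}(X)|$ (so $s_1(\tau)$ is the number of incoming stable ends, $u_2(\tau)$ of outgoing unstable ends). Weight $w(\tau)=\sum_vw(\tau(v))$. $O(\tau)=|\sigma^{-1}(o)|$ and $B(\tau)$ is the number of nodes $v$ with $\mu(v)=1$. *)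

theory Defs
  imports Main
begin

text \<open>Abstract vertex types: o (interior), u (unstable), s (stable).\<close>
datatype vtype = Ov | Uv | Sv

text \<open>An abstract edge (mu, (o1,u1,s1), (o2,u2,s2)); the triples are encoded as
  functions vtype => nat, so X_1 = e1 X and X_2 = e2 X.\<close>
type_synonym abs_edge = "nat \<times> (vtype \<Rightarrow> nat) \<times> (vtype \<Rightarrow> nat)"

definition emu :: "abs_edge \<Rightarrow> nat" where "emu \<epsilon> = fst \<epsilon>"
definition end1 :: "abs_edge \<Rightarrow> vtype \<Rightarrow> nat" where "end1 \<epsilon> = fst (snd \<epsilon>)"
definition end2 :: "abs_edge \<Rightarrow> vtype \<Rightarrow> nat" where "end2 \<epsilon> = snd (snd \<epsilon>)"

definition abs_edge_ok :: "abs_edge \<Rightarrow> bool" where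
  "abs_edge_ok \<epsilon> \<longleftrightarrow> emu \<epsilon> \<in> {0,1}
     \<and> (emu \<epsilon> = 0 \<longrightarrow> end1 \<epsilon> Sv = 0 \<and> end2 \<epsilon> Uv = 0)
     \<and> (emu \<epsilon> = 1 \<longrightarrow> end1 \<epsilon> Ov = 0 \<and> end2 \<epsilon> Ov = 0)"

definition edge_weight :: "abs_edge \<Rightarrow> int" where
  "edge_weight \<epsilon> = (if emu \<epsilon> = 0 then 1 else 2 - int (end1 \<epsilon> Sv) - int (end2 \<epsilon> Uv))"

definition reach :: "('e \<Rightarrow> 'v) \<Rightarrow> ('e \<Rightarrow> 'v) \<Rightarrow> 'e set \<Rightarrow> ('v \<times> 'v) set" where
  "reach src tgt F = (\<Union>e\<in>F. {(src e, tgt e), (tgt e, src e)})\<^sup>*"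

definition directed_tree :: "'v set \<Rightarrow> 'e set \<Rightarrow> ('e \<Rightarrow> 'v) \<Rightarrow> ('e \<Rightarrow> 'v) \<Rightarrow> bool" where
  "directed_tree V E src tgt \<longleftrightarrow> finite V \<and> V \<noteq> {} \<and> finite E
     \<and> (\<forall>e\<in>E. src e \<in> V \<and> tgt e \<in> V)
     \<and> (\<forall>x\<in>V. \<forall>y\<in>V. (x, y) \<in> reach src tgt E)
     \<and> (\<forall>e\<in>E. (src e, tgt e) \<notin> reach src tgt (E - {e}))"

definition abstract_path ::
  "'v set \<Rightarrow> 'e set \<Rightarrow> ('e \<Rightarrow> 'v) \<Rightarrow> ('e \<Rightarrow> 'v) \<Rightarrow> ('v \<Rightarrow> abs_edge) \<Rightarrow> ('e \<Rightarrow> vtype) \<Rightarrow> bool" where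
  "abstract_path V E src tgt \<tau> \<sigma> \<longleftrightarrow> directed_tree V E src tgt
     \<and> (\<forall>v\<in>V. abs_edge_ok (\<tau> v))
     \<and> (\<forall>v\<in>V. \<forall>X. end1 (\<tau> v) X \<ge> card {e\<in>E. tgt e = v \<and> \<sigma> e = X}
                 \<and> end2 (\<tau> v) X \<ge> card {e\<in>E. src e = v \<and> \<sigma> e = X})"

definition path_end1 :: "'v set \<Rightarrow> 'e set \<Rightarrow> ('v \<Rightarrow> abs_edge) \<Rightarrow> ('e \<Rightarrow> vtype) \<Rightarrow> vtype \<Rightarrow> int" where
  "path_end1 V E \<tau> \<sigma> X = (\<Sum>v\<in>V. int (end1 (\<tau> v) X)) - int (card {e\<in>E. \<sigma> e = X})"

definition path_end2 :: "'v set \<Rightarrow> 'e set \<Rightarrow> ('v \<Rightarrow> abs_edge) \<Rightarrow> ('e \<Rightarrow> vtype) \<Rightarrow> vtype \<Rightarrow> int" where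
  "path_end2 V E \<tau> \<sigma> X = (\<Sum>v\<in>V. int (end2 (\<tau> v) X)) - int (card {e\<in>E. \<sigma> e = X})"

definition path_weight :: "'v set \<Rightarrow> ('v \<Rightarrow> abs_edge) \<Rightarrow> int" where
  "path_weight V \<tau> = (\<Sum>v\<in>V. edge_weight (\<tau> v))"

definition path_O :: "'e set \<Rightarrow> ('e \<Rightarrow> vtype) \<Rightarrow> nat" where
  "path_O E \<sigma> = card {e\<in>E. \<sigma> e = Ov}"

definition path_B :: "'v set \<Rightarrow> ('v \<Rightarrow> abs_edge) \<Rightarrow> nat" where
  "path_B V \<tau> = card {v\<in>V. emu (\<tau> v) = 1}"

end

theory Submission
  imports Defs
begin

text \<open>Each node contributes 1 + [\<mu> = 1] - s1 - u2 to the weight, so the weight of the path is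
  |V| + B minus the sums of s1 and u2 over the nodes. Passing to the ends subtracts the
  stable and unstable breaks from these sums, i.e. adds back |E| - O. Since the underlying
  graph is a tree, |V| = |E| + 1, which gives the formula. The tree count is the case of one
  component of the forest identity: components + edges = vertices, proved by adding edges
  one at a time, each of which merges two components.\<close>

lemma sym_reach: "sym (reach src tgt F)"
  unfolding reach_def by (rule sym_rtrancl) (auto simp: sym_def)

lemma reach_sym: "(x, y) \<in> reach src tgt F \<Longrightarrow> (y, x) \<in> reach src tgt F"
  using sym_reach by (rule symD)

lemma reach_trans:
  "(x, y) \<in> reach src tgt F \<Longrightarrow> (y, z) \<in> reach src tgt F \<Longrightarrow> (x, z) \<in> reach src tgt F"
  unfolding reach_def by (rule rtrancl_trans)

lemma reach_refl [simp]: "(x, x) \<in> reach src tgt F"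
  unfolding reach_def by simp

lemma reach_mono: "F \<subseteq> G \<Longrightarrow> reach src tgt F \<subseteq> reach src tgt G"
  unfolding reach_def by (rule rtrancl_mono) blast

lemma reach_empty: "reach src tgt {} = Id"
  unfolding reach_def by simp

lemma reach_closed:
  assumes "\<forall>e\<in>F. src e \<in> V \<and> tgt e \<in> V" and "(x, y) \<in> reach src tgt F" and "x \<in> V"
  shows "y \<in> V"
  using assms(2,3) unfolding reach_def
  by (induction rule: rtrancl_induct) (use assms(1) in auto)

lemma Image_reach_eq_iff:
  "reach src tgt F `` {x} = reach src tgt F `` {y} \<longleftrightarrow> (x, y) \<in> reach src tgt F"
proof
  show "(x, y) \<in> reach src tgt F" if "reach src tgt F `` {x} = reach src tgt F `` {y}"
    using that reach_refl[of y src tgt F] by blast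
  show "reach src tgt F `` {x} = reach src tgt F `` {y}" if xy: "(x, y) \<in> reach src tgt F"
    using reach_trans[OF xy] reach_trans[OF reach_sym[OF xy]] by blast
qed

lemma mem_reach_class_iff:
  "v \<in> reach src tgt F `` {a} \<longleftrightarrow> reach src tgt F `` {v} = reach src tgt F `` {a}"
  unfolding Image_reach_eq_iff Image_singleton_iff by (metis reach_sym)

lemma reach_insert:
  assumes "(src e, tgt e) \<notin> reach src tgt F"
  defines "C \<equiv> reach src tgt F `` {src e} \<union> reach src tgt F `` {tgt e}"
  shows "reach src tgt (insert e F) = reach src tgt F \<union> C \<times> C"
proof
  let ?R = "reach src tgt F" and ?L = "reach src tgt (insert e F)"
  have C_closed: "y \<in> C" if "x \<in> C" "(x, y) \<in> ?R \<or> (y, x) \<in> ?R" for x y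
    using that reach_sym reach_trans unfolding C_def by (metis UnCI UnE Image_singleton_iff)
  have ends_C: "src e \<in> C" "tgt e \<in> C"
    unfolding C_def by auto
  show "?L \<subseteq> ?R \<union> C \<times> C"
  proof (rule subrelI)
    fix x y assume "(x, y) \<in> ?L"
    then show "(x, y) \<in> ?R \<union> C \<times> C"
      unfolding reach_def[of src tgt "insert e F"]
    proof (induction rule: rtrancl_induct)
      case (step y z)
      then consider "(y, z) \<in> ?R" | "y \<in> C" "z \<in> C"
        using ends_C unfolding reach_def by blast
      then show ?case
      proof cases
        case 1
        then show ?thesis
          using step.IH reach_trans[where x=x and y=y and z=z] C_closed[of y z] by blast
      next
        case 2
        then show ?thesis
          using step.IH C_closed by blast
      qed
    qed simp
  qed
  show "?R \<union> C \<times> C \<subseteq> ?L"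
  proof -
    have R_L: "?R \<subseteq> ?L"
      by (rule reach_mono) blast
    have "(src e, tgt e) \<in> ?L"
      unfolding reach_def by blast
    then have from_src: "(src e, x) \<in> ?L" if "x \<in> C" for x
      using that R_L reach_trans unfolding C_def by (metis Image_singleton_iff UnE subsetD)
    have "C \<times> C \<subseteq> ?L"
    proof clarify
      fix x y assume "x \<in> C" "y \<in> C"
      then show "(x, y) \<in> ?L"
        using from_src reach_sym reach_trans by metis
    qed
    with R_L show ?thesis by blast
  qed
qed

definition reach_classes :: "'v set \<Rightarrow> ('e \<Rightarrow> 'v) \<Rightarrow> ('e \<Rightarrow> 'v) \<Rightarrow> 'e set \<Rightarrow> 'v set set" where
  "reach_classes V src tgt F = (\<lambda>v. reach src tgt F `` {v}) ` V"

lemma reach_classes_insert: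
  assumes ends: "src e \<in> V" "tgt e \<in> V" and new: "(src e, tgt e) \<notin> reach src tgt F"
  defines "A \<equiv> reach src tgt F `` {src e}" and "B \<equiv> reach src tgt F `` {tgt e}"
  shows "reach_classes V src tgt (insert e F) = insert (A \<union> B) (reach_classes V src tgt F - {A, B})"
proof -
  let ?R = "reach src tgt F"
  define merge where "merge K = (if K \<in> {A, B} then A \<union> B else K)" for K
  have "v \<in> A \<union> B \<longleftrightarrow> ?R `` {v} \<in> {A, B}" for v
    unfolding A_def B_def Un_iff mem_reach_class_iff by simp
  then have "reach src tgt (insert e F) `` {v} = merge (?R `` {v})" for v
    using reach_insert[OF new] unfolding A_def B_def merge_def by auto
  then have "reach_classes V src tgt (insert e F) = merge ` reach_classes V src tgt F"
    unfolding reach_classes_def image_image by simp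
  moreover have "A \<in> reach_classes V src tgt F" "B \<in> reach_classes V src tgt F"
    unfolding reach_classes_def A_def B_def using ends by auto
  ultimately show ?thesis
    unfolding merge_def by auto
qed

definition forest :: "('e \<Rightarrow> 'v) \<Rightarrow> ('e \<Rightarrow> 'v) \<Rightarrow> 'e set \<Rightarrow> bool" where
  "forest src tgt F \<longleftrightarrow> (\<forall>e\<in>F. (src e, tgt e) \<notin> reach src tgt (F - {e}))"

lemma forest_insertD:
  assumes "forest src tgt (insert e F)" and "e \<notin> F"
  shows "forest src tgt F" and "(src e, tgt e) \<notin> reach src tgt F"
proof -
  show "forest src tgt F"
    using assms(1) reach_mono[of "F - {_}" "insert e F - {_}" src tgt]
    unfolding forest_def by blast
  show "(src e, tgt e) \<notin> reach src tgt F"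
    using assms unfolding forest_def by auto
qed

lemma card_reach_classes_forest:
  assumes "finite V" and "finite F" and "forest src tgt F"
    and "\<forall>e\<in>F. src e \<in> V \<and> tgt e \<in> V"
  shows "card (reach_classes V src tgt F) + card F = card V"
  using assms(2-)
proof (induction F rule: finite_induct)
  case empty
  have "reach_classes V src tgt {} = (\<lambda>v. {v}) ` V"
    unfolding reach_classes_def reach_empty by auto
  then show ?case
    by (simp add: card_image)
next
  case (insert e F)
  let ?K = "reach_classes V src tgt F"
  define A where "A = reach src tgt F `` {src e}"
  define B where "B = reach src tgt F `` {tgt e}"
  note forest_insertD[OF insert.prems(1) insert.hyps(2)]
  then have forest: "forest src tgt F" and new: "(src e, tgt e) \<notin> reach src tgt F"
    by simp_all
  have ends: "src e \<in> V" "tgt e \<in> V"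
    using insert.prems(2) by auto
  have fin: "finite ?K"
    unfolding reach_classes_def using assms(1) by simp
  have AB: "{A, B} \<subseteq> ?K" "card {A, B} = 2"
    using ends new Image_reach_eq_iff[of src tgt F "src e" "tgt e"]
    unfolding reach_classes_def A_def B_def by auto
  have "A \<union> B \<notin> ?K - {A, B}"
  proof
    assume "A \<union> B \<in> ?K - {A, B}"
    then obtain v where v: "A \<union> B = reach src tgt F `` {v}" "A \<union> B \<noteq> A"
      unfolding reach_classes_def by auto
    have "src e \<in> reach src tgt F `` {v}"
      using v(1) unfolding A_def by auto
    then have "reach src tgt F `` {src e} = reach src tgt F `` {v}"
      by (simp only: mem_reach_class_iff)
    with v(1) have "A = A \<union> B"
      unfolding A_def by (simp only:)
    with v(2) show False by simp
  qed
  then have "card (reach_classes V src tgt (insert e F)) = card (?K - {A, B}) + 1"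
    unfolding reach_classes_insert[OF ends new] A_def[symmetric] B_def[symmetric]
    using fin by simp
  moreover have "card (?K - {A, B}) + 2 = card ?K"
    using AB fin card_Diff_subset[of "{A, B}" ?K] card_mono[OF fin AB(1)] by simp
  ultimately show ?case
    using insert.IH[OF forest] insert.prems(2) insert.hyps by simp
qed

lemma card_directed_tree:
  assumes "directed_tree V E src tgt"
  shows "card V = card E + 1"
proof -
  have tree: "finite V" "V \<noteq> {}" "finite E" "\<forall>e\<in>E. src e \<in> V \<and> tgt e \<in> V"
    "\<forall>x\<in>V. \<forall>y\<in>V. (x, y) \<in> reach src tgt E" "forest src tgt E"
    using assms unfolding directed_tree_def forest_def by auto
  have "reach src tgt E `` {v} = V" if "v \<in> V" for v
    using that tree(4,5) reach_closed[where F=E and V=V] by blast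
  then have "reach_classes V src tgt E = {V}"
    unfolding reach_classes_def using tree(2) by auto
  then show ?thesis
    using card_reach_classes_forest[OF tree(1,3,6,4)] by simp
qed

lemma edge_weight_eq:
  assumes "abs_edge_ok \<epsilon>"
  shows "edge_weight \<epsilon> = 1 + (if emu \<epsilon> = 1 then 1 else 0) - int (end1 \<epsilon> Sv) - int (end2 \<epsilon> Uv)"
  using assms unfolding abs_edge_ok_def edge_weight_def by auto

lemma card_eq_sum_card_vtype:
  assumes "finite E"
  shows "card E = card {e\<in>E. \<sigma> e = Ov} + card {e\<in>E. \<sigma> e = Uv} + card {e\<in>E. \<sigma> e = Sv}"
proof -
  have "E = {e\<in>E. \<sigma> e = Ov} \<union> ({e\<in>E. \<sigma> e = Uv} \<union> {e\<in>E. \<sigma> e = Sv})"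
    by (auto intro: vtype.exhaust)
  also have "card \<dots> = card {e\<in>E. \<sigma> e = Ov} + (card {e\<in>E. \<sigma> e = Uv} + card {e\<in>E. \<sigma> e = Sv})"
    using assms by (subst card_Un_disjoint; auto)+
  finally show ?thesis by simp
qed

theorem corollary3p12:
  fixes V :: "'v set" and E :: "'e set" and src tgt :: "'e \<Rightarrow> 'v"
    and \<tau> :: "'v \<Rightarrow> abs_edge" and \<sigma> :: "'e \<Rightarrow> vtype"
  assumes "abstract_path V E src tgt \<tau> \<sigma>"
  shows "path_weight V \<tau> = 1 + int (path_O E \<sigma>) + int (path_B V \<tau>)
           - path_end1 V E \<tau> \<sigma> Sv - path_end2 V E \<tau> \<sigma> Uv"
proof -
  have tree: "directed_tree V E src tgt" and ok: "\<forall>v\<in>V. abs_edge_ok (\<tau> v)"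
    using assms unfolding abstract_path_def by auto
  have fin: "finite V" "finite E"
    using tree unfolding directed_tree_def by auto
  have "path_weight V \<tau> = (\<Sum>v\<in>V. 1 + (if emu (\<tau> v) = 1 then 1 else 0)
              - int (end1 (\<tau> v) Sv) - int (end2 (\<tau> v) Uv))"
    unfolding path_weight_def using ok by (simp add: edge_weight_eq)
  also have "\<dots> = int (card V) + int (path_B V \<tau>)
       - (\<Sum>v\<in>V. int (end1 (\<tau> v) Sv)) - (\<Sum>v\<in>V. int (end2 (\<tau> v) Uv))"
    unfolding path_B_def using fin(1)
    by (simp add: sum.distrib sum_subtractf sum.If_cases Int_def)
  finally show ?thesis
    unfolding path_end1_def path_end2_def path_O_def
    using card_directed_tree[OF tree] card_eq_sum_card_vtype[OF fin(2), of \<sigma>] by simp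
qed

end
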